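(* Let $N$ be a normal subgroup of $F$ and let $L_N$ be the normal closure of $N$ in $F(Y_C)$. Then $L_N\trianglelefteq F(Y_C)$ and $L_N\cap F=N$.
   Context: Let $m\ge1$ and $C\ge1$ be integers. For $i=1,\dots,m$ let $Y_{C,i}=\{a_{1,i},\dots,a_{C,i}\}$, let $Y_C=\bigcup_i Y_{C,i}$ (all $a_{j,i}$ distinct), and let $F(Y_C)$ be the free group on $Y_C$. Put $A_i=a_{1,i}a_{2,i}\cdots a_{C,i}\in F(Y_C)$, $\mathcal{D}=\{A_1,\dots,A_m\}$, and let $F$ be the subgroup of $F(Y_C)$ generated by $\mathcal{D}$ (which is free with basis $\mathcal{D}$). *)

theory Defs
  imports "HOL-Algebra.Algebra"
begin

text \<open>Free group on a set of generators Y, realised as reduced words.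
A letter is a pair (b, y): (False, y) stands for y, (True, y) for y inverse.\<close>

type_synonym 'a letter = "bool \<times> 'a"

definition cancels :: "'a letter \<Rightarrow> 'a letter \<Rightarrow> bool" where
  "cancels x y \<longleftrightarrow> snd x = snd y \<and> fst x \<noteq> fst y"

fun reduced :: "'a letter list \<Rightarrow> bool" where
  "reduced [] = True"
| "reduced [x] = True"
| "reduced (x # y # zs) = (\<not> cancels x y \<and> reduced (y # zs))"

definition reduce :: "'a letter list \<Rightarrow> 'a letter list" where
  "reduce w = foldr (\<lambda>x acc. case acc of [] \<Rightarrow> [x]
                      | y # ys \<Rightarrow> (if cancels x y then ys else x # acc)) w []"

definition free_group :: "'a set \<Rightarrow> ('a letter list) monoid" where
  "free_group Y = \<lparr> carrier = {w. snd ` set w \<subseteq> Y \<and> reduced w},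
                    monoid.mult = (\<lambda>u v. reduce (u @ v)),
                    monoid.one = [] \<rparr>"

definition normal_closure :: "('a, 'b) monoid_scheme \<Rightarrow> 'a set \<Rightarrow> 'a set" where
  "normal_closure G S =
     generate G (\<Union>g\<in>carrier G. (\<lambda>s. g \<otimes>\<^bsub>G\<^esub> s \<otimes>\<^bsub>G\<^esub> inv\<^bsub>G\<^esub> g) ` S)"

text \<open>The generators a_{j,i} are encoded as pairs (j,i), 1 \<le> j \<le> C, 1 \<le> i \<le> m.\<close>
definition Y_C :: "nat \<Rightarrow> nat \<Rightarrow> (nat \<times> nat) set" where
  "Y_C m C = {(j, i). 1 \<le> j \<and> j \<le> C \<and> 1 \<le> i \<and> i \<le> m}"

definition A_word :: "nat \<Rightarrow> nat \<Rightarrow> (nat \<times> nat) letter list" where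
  "A_word C i = map (\<lambda>j. (False, (j, i))) [1..<C+1]"

definition D_set :: "nat \<Rightarrow> nat \<Rightarrow> (nat \<times> nat) letter list set" where
  "D_set m C = A_word C ` {1..m}"

definition F_sub :: "nat \<Rightarrow> nat \<Rightarrow> (nat \<times> nat) letter list set" where
  "F_sub m C = generate (free_group (Y_C m C)) (D_set m C)"

end

theory Submission
  imports Defs
begin

text \<open>The endomorphism of F(Y_C) sending a_{1,i} to A_i and every other generator to 1
retracts F(Y_C) onto F. Pulling N back along this retraction gives a normal subgroup of
F(Y_C) that contains N and meets F exactly in N; hence it contains the normal closure L_N,
so that L_N \<inter> F \<subseteq> N, while N \<subseteq> L_N \<inter> F is clear.\<close>

section \<open>Normal closures and retractions\<close>

lemma (in group) normal_closure_normal: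
  assumes "S \<subseteq> carrier G"
  shows "normal_closure G S \<lhd> G"
  unfolding normal_closure_def
proof (rule normal_generateI)
  show "(\<Union>g\<in>carrier G. (\<lambda>s. g \<otimes> s \<otimes> inv g) ` S) \<subseteq> carrier G"
    using assms by auto
next
  fix h g
  assume "h \<in> (\<Union>g\<in>carrier G. (\<lambda>s. g \<otimes> s \<otimes> inv g) ` S)" and g: "g \<in> carrier G"
  then obtain g' s where g': "g' \<in> carrier G" and s: "s \<in> S" and h: "h = g' \<otimes> s \<otimes> inv g'"
    by blast
  have "g \<otimes> h \<otimes> inv g = (g \<otimes> g') \<otimes> s \<otimes> inv (g \<otimes> g')"
    using g g' s assms by (auto simp: h m_assoc inv_mult_group)
  then show "g \<otimes> h \<otimes> inv g \<in> (\<Union>g\<in>carrier G. (\<lambda>s. g \<otimes> s \<otimes> inv g) ` S)"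
    using g g' s by blast
qed

lemma (in group) subset_normal_closure:
  assumes "S \<subseteq> carrier G"
  shows "S \<subseteq> normal_closure G S"
proof
  fix s assume "s \<in> S"
  then have "s = \<one> \<otimes> s \<otimes> inv \<one>"
    using assms by auto
  then show "s \<in> normal_closure G S"
    unfolding normal_closure_def using \<open>s \<in> S\<close> by (blast intro: generate.incl)
qed

lemma (in group) normal_closure_minimal:
  assumes "H \<lhd> G" and "S \<subseteq> H"
  shows "normal_closure G S \<subseteq> H"
  unfolding normal_closure_def
proof (rule generate_subgroup_incl)
  show "subgroup H G"
    using assms(1) by (rule normal_imp_subgroup)
  show "(\<Union>g\<in>carrier G. (\<lambda>s. g \<otimes> s \<otimes> inv g) ` S) \<subseteq> H"
    using assms by (auto intro: normal.inv_op_closed2)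
qed

lemma (in group_hom) normal_vimage:
  assumes "N \<lhd> H"
  shows "h -` N \<inter> carrier G \<lhd> G"
proof -
  interpret N: normal N H by (rule assms)
  have "subgroup (h -` N \<inter> carrier G) G"
  proof (rule G.subgroupI)
    show "h -` N \<inter> carrier G \<noteq> {}"
      using N.one_closed G.one_closed by (metis IntI empty_iff hom_one vimageI)
  qed auto
  moreover have "g \<otimes> x \<otimes> inv g \<in> h -` N" if "g \<in> carrier G" "x \<in> h -` N \<inter> carrier G" for g x
    using that N.inv_op_closed2 by simp
  ultimately show ?thesis
    by (simp add: G.normal_inv_iff)
qed

lemma (in group) subgroup_fixed_points:
  assumes "r \<in> hom G G"
  shows "subgroup {x \<in> carrier G. r x = x} G"
proof -
  interpret group_hom G G r
    using assms by (simp add: group_hom_def group_hom_axioms_def)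
  show ?thesis
    by (rule subgroupI) auto
qed

lemma (in group) normal_closure_Int_retract:
  assumes F: "subgroup F G" and r: "r \<in> hom G G" "r ` carrier G \<subseteq> F"
    and fixed: "\<And>x. x \<in> F \<Longrightarrow> r x = x" and N: "N \<lhd> G\<lparr>carrier := F\<rparr>"
  shows "normal_closure G N \<inter> F = N"
proof -
  have NF: "N \<subseteq> F"
    using subgroup.subset[OF normal_imp_subgroup[OF N]] by simp
  have "group_hom G (G\<lparr>carrier := F\<rparr>) r"
    using r subgroup_imp_group[OF F] unfolding group_hom_def group_hom_axioms_def hom_def
    by auto
  then have K: "r -` N \<inter> carrier G \<lhd> G"
    using N by (rule group_hom.normal_vimage)
  have "N \<subseteq> r -` N \<inter> carrier G"
    using NF fixed subgroup.subset[OF F] by auto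
  then have "normal_closure G N \<subseteq> r -` N \<inter> carrier G"
    using K by (rule normal_closure_minimal[rotated])
  then have "normal_closure G N \<inter> F \<subseteq> N"
    using fixed by auto
  moreover have "N \<subseteq> normal_closure G N"
    using NF subgroup.subset[OF F] by (intro subset_normal_closure) auto
  ultimately show ?thesis
    using NF by blast
qed

section \<open>Free reduction\<close>

definition letter_inv :: "'a letter \<Rightarrow> 'a letter" where
  "letter_inv x = (\<not> fst x, snd x)"

definition word_inv :: "'a letter list \<Rightarrow> 'a letter list" where
  "word_inv w = rev (map letter_inv w)"

lemma cancels_iff_letter_inv: "cancels x y \<longleftrightarrow> y = letter_inv x"
  by (cases x; cases y) (auto simp: cancels_def letter_inv_def)

lemma letter_inv_letter_inv [simp]: "letter_inv (letter_inv x) = x"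
  by (simp add: letter_inv_def)

lemma word_inv_word_inv [simp]: "word_inv (word_inv w) = w"
  by (simp add: word_inv_def rev_map comp_def)

lemma word_inv_Cons: "word_inv (x # w) = word_inv w @ [letter_inv x]"
  by (simp add: word_inv_def)

definition reduce_step :: "'a letter \<Rightarrow> 'a letter list \<Rightarrow> 'a letter list" where
  "reduce_step x r = (case r of [] \<Rightarrow> [x] | y # ys \<Rightarrow> (if cancels x y then ys else x # r))"

lemma reduce_foldr: "reduce w = foldr reduce_step w []"
  unfolding reduce_def reduce_step_def by simp

lemma reduce_Nil [simp]: "reduce [] = []"
  by (simp add: reduce_foldr)

lemma reduce_Cons: "reduce (x # w) = reduce_step x (reduce w)"
  by (simp add: reduce_foldr)

lemma reduce_append: "reduce (u @ v) = foldr reduce_step u (reduce v)"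
  by (simp add: reduce_foldr)

lemma reduced_Cons: "reduced (x # w) \<longleftrightarrow> reduced w \<and> (w = [] \<or> \<not> cancels x (hd w))"
  by (cases w) auto

lemma reduced_snoc: "reduced (w @ [x]) \<longleftrightarrow> reduced w \<and> (w = [] \<or> \<not> cancels (last w) x)"
  by (induct w) (auto simp: reduced_Cons)

lemma reduced_reduce_step: "reduced r \<Longrightarrow> reduced (reduce_step x r)"
  by (cases r) (auto simp: reduce_step_def reduced_Cons)

lemma reduced_foldr_reduce_step: "reduced r \<Longrightarrow> reduced (foldr reduce_step u r)"
  by (induct u) (auto simp: reduced_reduce_step)

lemma reduced_reduce: "reduced (reduce w)"
  by (simp add: reduce_foldr reduced_foldr_reduce_step)

lemma reduce_step_reduced: "reduced (x # r) \<Longrightarrow> reduce_step x r = x # r"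
  by (cases r) (auto simp: reduce_step_def)

lemma reduce_reduced: "reduced w \<Longrightarrow> reduce w = w"
  by (induct w) (auto simp: reduce_Cons reduced_Cons reduce_step_reduced)

lemma reduce_step_cancel:
  assumes "cancels x y" and "reduced r"
  shows "reduce_step x (reduce_step y r) = r"
proof (cases r)
  case Nil
  then show ?thesis
    using assms(1) by (simp add: reduce_step_def)
next
  case (Cons z zs)
  show ?thesis
  proof (cases "cancels y z")
    case True
    then have "z = x"
      using assms(1) by (simp add: cancels_iff_letter_inv)
    moreover have "reduce_step y r = zs"
      using True Cons by (simp add: reduce_step_def)
    ultimately show ?thesis
      using Cons assms(2) by (simp add: reduce_step_reduced)
  next
    case False
    then show ?thesis
      using Cons assms(1) by (simp add: reduce_step_def cancels_iff_letter_inv)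
  qed
qed

lemma foldr_reduce_step_reduce_step:
  assumes "reduced w" and "reduced r"
  shows "foldr reduce_step (reduce_step x w) r = reduce_step x (foldr reduce_step w r)"
proof (cases w)
  case (Cons y ys)
  show ?thesis
  proof (cases "cancels x y")
    case True
    have "reduced (foldr reduce_step ys r)"
      using assms Cons by (simp add: reduced_foldr_reduce_step reduced_Cons)
    moreover have "reduce_step x w = ys"
      using True Cons by (simp add: reduce_step_def)
    ultimately show ?thesis
      using reduce_step_cancel[OF True] Cons by simp
  qed (simp add: Cons reduce_step_def)
qed (simp add: reduce_step_def)

lemma foldr_reduce_step_reduce: "reduced r \<Longrightarrow> foldr reduce_step (reduce u) r = foldr reduce_step u r"
  by (induct u) (simp_all add: reduce_Cons foldr_reduce_step_reduce_step reduced_reduce)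

lemma reduce_reduce_append: "reduce (reduce u @ v) = reduce (u @ v)"
  by (simp add: reduce_append foldr_reduce_step_reduce reduced_reduce)

lemma reduce_append_reduce: "reduce (u @ reduce v) = reduce (u @ v)"
  by (simp add: reduce_append reduce_reduced reduced_reduce)

lemma reduce_append_word_inv: "reduce (w @ word_inv w) = []"
proof (induct w)
  case (Cons x w)
  have "reduce ((x # w) @ word_inv (x # w)) = reduce_step x (reduce ((w @ word_inv w) @ [letter_inv x]))"
    by (simp add: word_inv_Cons reduce_Cons)
  also have "\<dots> = reduce_step x (reduce (reduce (w @ word_inv w) @ [letter_inv x]))"
    by (simp only: reduce_reduce_append)
  also have "\<dots> = []"
    using Cons by (simp add: reduce_Cons reduce_step_def cancels_iff_letter_inv)
  finally show ?case .
qed (simp add: word_inv_def)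

lemma set_reduce: "set (reduce w) \<subseteq> set w"
proof (induct w)
  case (Cons x w)
  then show ?case
    by (cases "reduce w") (auto simp: reduce_Cons reduce_step_def)
qed simp

lemma reduced_word_inv: "reduced w \<Longrightarrow> reduced (word_inv w)"
proof (induct w)
  case (Cons x w)
  show ?case
  proof (cases w)
    case (Cons y ys)
    then have "\<not> cancels (last (word_inv w)) (letter_inv x)"
      using \<open>reduced (x # w)\<close> by (auto simp: word_inv_Cons cancels_def letter_inv_def)
    moreover have "reduced (word_inv w)"
      using Cons.hyps \<open>reduced (x # w)\<close> by (simp add: reduced_Cons)
    ultimately show ?thesis
      by (simp only: word_inv_Cons reduced_snoc) simp
  qed (simp add: word_inv_def)
qed (simp add: word_inv_def)

lemma snd_set_word_inv [simp]: "snd ` set (word_inv w) = snd ` set w"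
  by (force simp: word_inv_def letter_inv_def)

lemma carrier_free_group: "carrier (free_group Y) = {w. snd ` set w \<subseteq> Y \<and> reduced w}"
  by (simp add: free_group_def)

lemma mult_free_group: "u \<otimes>\<^bsub>free_group Y\<^esub> v = reduce (u @ v)"
  by (simp add: free_group_def)

lemma one_free_group: "\<one>\<^bsub>free_group Y\<^esub> = []"
  by (simp add: free_group_def)

lemma word_inv_in_carrier: "w \<in> carrier (free_group Y) \<Longrightarrow> word_inv w \<in> carrier (free_group Y)"
  by (simp add: carrier_free_group reduced_word_inv)

lemma word_inv_mult_free_group: "word_inv w \<otimes>\<^bsub>free_group Y\<^esub> w = \<one>\<^bsub>free_group Y\<^esub>"
  using reduce_append_word_inv[of "word_inv w"] by (simp add: mult_free_group one_free_group)

lemma group_free_group: "group (free_group Y)"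
proof (rule groupI)
  fix u v
  assume "u \<in> carrier (free_group Y)" and "v \<in> carrier (free_group Y)"
  then show "u \<otimes>\<^bsub>free_group Y\<^esub> v \<in> carrier (free_group Y)"
    using set_reduce by (fastforce simp: carrier_free_group mult_free_group reduced_reduce)
next
  fix u v w
  show "u \<otimes>\<^bsub>free_group Y\<^esub> v \<otimes>\<^bsub>free_group Y\<^esub> w = u \<otimes>\<^bsub>free_group Y\<^esub> (v \<otimes>\<^bsub>free_group Y\<^esub> w)"
    by (simp add: mult_free_group reduce_reduce_append reduce_append_reduce)
next
  fix w
  assume "w \<in> carrier (free_group Y)"
  then show "\<one>\<^bsub>free_group Y\<^esub> \<otimes>\<^bsub>free_group Y\<^esub> w = w"
    by (simp add: carrier_free_group mult_free_group one_free_group reduce_reduced)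
  show "\<exists>v\<in>carrier (free_group Y). v \<otimes>\<^bsub>free_group Y\<^esub> w = \<one>\<^bsub>free_group Y\<^esub>"
    using \<open>w \<in> carrier (free_group Y)\<close> word_inv_in_carrier word_inv_mult_free_group by blast
qed (simp add: carrier_free_group one_free_group)

lemma inv_free_group: "w \<in> carrier (free_group Y) \<Longrightarrow> inv\<^bsub>free_group Y\<^esub> w = word_inv w"
  by (intro group.inv_equality group_free_group word_inv_mult_free_group word_inv_in_carrier)


section \<open>Substitution homomorphisms\<close>

definition subst_letter :: "('a \<Rightarrow> 'b letter list) \<Rightarrow> 'a letter \<Rightarrow> 'b letter list" where
  "subst_letter f x = (if fst x then word_inv (f (snd x)) else f (snd x))"

definition word_subst :: "('a \<Rightarrow> 'b letter list) \<Rightarrow> 'a letter list \<Rightarrow> 'b letter list" where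
  "word_subst f w = reduce (concat (map (subst_letter f) w))"

lemma subst_letter_letter_inv: "subst_letter f (letter_inv x) = word_inv (subst_letter f x)"
  by (simp add: subst_letter_def letter_inv_def)

lemma word_subst_Nil [simp]: "word_subst f [] = []"
  by (simp add: word_subst_def)

lemma word_subst_Cons: "word_subst f (x # w) = reduce (subst_letter f x @ word_subst f w)"
  by (simp add: word_subst_def reduce_append_reduce)

lemma word_subst_reduce_step: "word_subst f (reduce_step x r) = word_subst f (x # r)"
proof (cases r)
  case (Cons y ys)
  show ?thesis
  proof (cases "cancels x y")
    case True
    then have "reduce (subst_letter f x @ subst_letter f y) = []"
      using reduce_append_word_inv by (simp add: cancels_iff_letter_inv subst_letter_letter_inv)
    then have "word_subst f (x # r)
        = reduce (reduce (subst_letter f x @ subst_letter f y) @ concat (map (subst_letter f) ys))"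
      unfolding word_subst_def reduce_reduce_append by (simp add: Cons)
    also have "\<dots> = word_subst f (reduce_step x r)"
      using \<open>reduce (subst_letter f x @ subst_letter f y) = []\<close> True Cons
      by (simp add: word_subst_def reduce_step_def)
    finally show ?thesis ..
  qed (simp add: Cons reduce_step_def)
qed (simp add: reduce_step_def)

lemma word_subst_reduce: "word_subst f (reduce w) = word_subst f w"
  by (induct w) (simp_all add: reduce_Cons word_subst_reduce_step word_subst_Cons)

lemma word_subst_append: "word_subst f (u @ v) = reduce (word_subst f u @ word_subst f v)"
  by (simp add: word_subst_def reduce_reduce_append reduce_append_reduce)

lemma word_subst_in_carrier:
  assumes "f ` Y \<subseteq> carrier (free_group Z)" and "snd ` set w \<subseteq> Y"
  shows "word_subst f w \<in> carrier (free_group Z)"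
proof -
  have "snd ` set (subst_letter f x) \<subseteq> Z" if "x \<in> set w" for x
    using that assms by (auto simp: subst_letter_def carrier_free_group)
  then have "snd ` set (concat (map (subst_letter f) w)) \<subseteq> Z"
    by auto
  then show ?thesis
    using set_reduce by (fastforce simp: word_subst_def carrier_free_group reduced_reduce)
qed

lemma word_subst_hom:
  assumes "f ` Y \<subseteq> carrier (free_group Z)"
  shows "word_subst f \<in> hom (free_group Y) (free_group Z)"
proof (rule homI)
  fix w
  assume "w \<in> carrier (free_group Y)"
  then show "word_subst f w \<in> carrier (free_group Z)"
    using assms by (intro word_subst_in_carrier) (auto simp: carrier_free_group)
next
  fix u v
  show "word_subst f (u \<otimes>\<^bsub>free_group Y\<^esub> v) = word_subst f u \<otimes>\<^bsub>free_group Z\<^esub> word_subst f v"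
    by (simp add: mult_free_group word_subst_reduce word_subst_append)
qed

lemma word_subst_in_subgroup:
  assumes H: "subgroup H (free_group Z)" and f: "f ` Y \<subseteq> H" and w: "snd ` set w \<subseteq> Y"
  shows "word_subst f w \<in> H"
  using w
proof (induct w)
  case Nil
  show ?case
    using subgroup.one_closed[OF H] by (simp add: one_free_group)
next
  case (Cons x w)
  have "f (snd x) \<in> H"
    using f Cons.prems by auto
  then have "subst_letter f x \<in> H"
    using subgroup.m_inv_closed[OF H] subgroup.subset[OF H] inv_free_group
    by (fastforce simp: subst_letter_def)
  then have "subst_letter f x \<otimes>\<^bsub>free_group Z\<^esub> word_subst f w \<in> H"
    using Cons by (auto intro: subgroup.m_closed[OF H])
  then show ?case
    by (simp add: word_subst_Cons mult_free_group)
qed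

section \<open>The retraction of F(Y_C) onto F\<close>

definition collapse_gen :: "nat \<Rightarrow> nat \<times> nat \<Rightarrow> (nat \<times> nat) letter list" where
  "collapse_gen C = (\<lambda>(j, i). if j = 1 then A_word C i else [])"

definition collapse :: "nat \<Rightarrow> (nat \<times> nat) letter list \<Rightarrow> (nat \<times> nat) letter list" where
  "collapse C = word_subst (collapse_gen C)"

lemma reduced_A_word: "reduced (A_word C i)"
proof -
  have "reduced (map (\<lambda>j. (False, (j, i))) js)" for js :: "nat list"
    by (induct js rule: induct_list012) (auto simp: cancels_def)
  then show ?thesis
    by (simp add: A_word_def)
qed

lemma A_word_in_carrier: "i \<in> {1..m} \<Longrightarrow> A_word C i \<in> carrier (free_group (Y_C m C))"
  using reduced_A_word by (auto simp: carrier_free_group) (auto simp: A_word_def Y_C_def)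

lemma D_set_subset_carrier: "D_set m C \<subseteq> carrier (free_group (Y_C m C))"
  by (auto simp: D_set_def A_word_in_carrier)

lemma subgroup_F_sub: "subgroup (F_sub m C) (free_group (Y_C m C))"
  unfolding F_sub_def
  by (rule group.generate_is_subgroup[OF group_free_group D_set_subset_carrier])

lemma collapse_gen_in_F_sub:
  assumes "y \<in> Y_C m C"
  shows "collapse_gen C y \<in> F_sub m C"
proof -
  obtain j i where y: "y = (j, i)" and i: "i \<in> {1..m}"
    using assms by (auto simp: Y_C_def)
  have "A_word C i \<in> F_sub m C"
    using i by (auto simp: F_sub_def D_set_def intro: generate.incl)
  moreover have "[] \<in> F_sub m C"
    using subgroup.one_closed[OF subgroup_F_sub] by (simp add: one_free_group)
  ultimately show ?thesis
    by (simp add: y collapse_gen_def)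
qed

lemma collapse_hom: "collapse C \<in> hom (free_group (Y_C m C)) (free_group (Y_C m C))"
  unfolding collapse_def
  using collapse_gen_in_F_sub subgroup.subset[OF subgroup_F_sub]
  by (intro word_subst_hom) blast

lemma collapse_in_F_sub:
  assumes "w \<in> carrier (free_group (Y_C m C))"
  shows "collapse C w \<in> F_sub m C"
  unfolding collapse_def
proof (rule word_subst_in_subgroup[OF subgroup_F_sub])
  show "collapse_gen C ` Y_C m C \<subseteq> F_sub m C"
    using collapse_gen_in_F_sub by blast
  show "snd ` set w \<subseteq> Y_C m C"
    using assms by (simp add: carrier_free_group)
qed

text \<open>A_i contains exactly one letter a_{1,i}, which collapse sends back to A_i.\<close>
lemma collapse_A_word:
  assumes "1 \<le> C"
  shows "collapse C (A_word C i) = A_word C i"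
proof -
  have "A_word C i = (False, (1, i)) # map (\<lambda>j. (False, (j, i))) [Suc 1..<C + 1]"
    using assms by (simp add: A_word_def upt_conv_Cons del: upt_Suc)
  moreover have
    "concat (map (subst_letter (collapse_gen C)) (map (\<lambda>j. (False, (j, i))) [Suc 1..<C + 1])) = []"
    by (auto simp: subst_letter_def collapse_gen_def)
  ultimately have "concat (map (subst_letter (collapse_gen C)) (A_word C i)) = A_word C i"
    by (subst (2) \<open>A_word C i = _\<close>) (simp add: subst_letter_def collapse_gen_def)
  then show ?thesis
    by (simp add: collapse_def word_subst_def reduce_reduced reduced_A_word)
qed

lemma collapse_F_sub:
  assumes "1 \<le> C" and "w \<in> F_sub m C"
  shows "collapse C w = w"
proof -
  interpret group "free_group (Y_C m C)"
    by (rule group_free_group)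
  have "D_set m C \<subseteq> {x \<in> carrier (free_group (Y_C m C)). collapse C x = x}"
    using D_set_subset_carrier collapse_A_word[OF assms(1)] by (auto simp: D_set_def)
  then have "F_sub m C \<subseteq> {x \<in> carrier (free_group (Y_C m C)). collapse C x = x}"
    unfolding F_sub_def by (intro generate_subgroup_incl subgroup_fixed_points collapse_hom)
  then show ?thesis
    using assms(2) by blast
qed

theorem lemma3p1:
  fixes m C :: nat and N :: "(nat \<times> nat) letter list set"
  assumes "1 \<le> m" and "1 \<le> C"
    and "N \<lhd> (free_group (Y_C m C))\<lparr>carrier := F_sub m C\<rparr>"
  shows "normal_closure (free_group (Y_C m C)) N \<lhd> free_group (Y_C m C)
    \<and> normal_closure (free_group (Y_C m C)) N \<inter> F_sub m C = N"
proof -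
  interpret group "free_group (Y_C m C)"
    by (rule group_free_group)
  note F = subgroup_F_sub[of m C]
  have "N \<subseteq> carrier (free_group (Y_C m C))"
    using subgroup.subset[OF normal_imp_subgroup[OF assms(3)]] subgroup.subset[OF F] by auto
  moreover have "normal_closure (free_group (Y_C m C)) N \<inter> F_sub m C = N"
    using collapse_in_F_sub collapse_F_sub[OF assms(2)]
    by (intro normal_closure_Int_retract[OF F collapse_hom _ _ assms(3)]) auto
  ultimately show ?thesis
    by (simp add: normal_closure_normal)
qed

end
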